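(* Let $G$ be a triangulation on $n$ vertices. Every independent set $I$ of vertices of $G$, each of degree at least six in $G$, satisfies $|I|\le (n-2)/3$.
   Context: Graphs are finite, undirected and simple. A triangulation is a planar graph embedded in the plane such that every face, including the outer face, is bounded by a cycle on three edges. A set of vertices is independent if no two of its vertices are adjacent. *)

theory Defs
  imports "HOL-Analysis.Analysis"
begin

definition simple_graph :: "'a set \<Rightarrow> 'a set set \<Rightarrow> bool" where
  "simple_graph V E \<longleftrightarrow> finite V \<and>
     (\<forall>e\<in>E. \<exists>u v. u \<in> V \<and> v \<in> V \<and> u \<noteq> v \<and> e = {u, v})"

definition adjacent :: "'a set set \<Rightarrow> 'a \<Rightarrow> 'a \<Rightarrow> bool" where
  "adjacent E u v \<longleftrightarrow> {u, v} \<in> E"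

definition degree :: "'a set \<Rightarrow> 'a set set \<Rightarrow> 'a \<Rightarrow> nat" where
  "degree V E v = card {u \<in> V. adjacent E v u}"

definition independent_set :: "'a set set \<Rightarrow> 'a set \<Rightarrow> bool" where
  "independent_set E I \<longleftrightarrow> (\<forall>u\<in>I. \<forall>v\<in>I. \<not> adjacent E u v)"

definition plane_embedding ::
  "'a set \<Rightarrow> 'a set set \<Rightarrow> ('a \<Rightarrow> complex) \<Rightarrow> ('a set \<Rightarrow> real \<Rightarrow> complex) \<Rightarrow> bool" where
  "plane_embedding V E pos arc_of \<longleftrightarrow>
     inj_on pos V \<and>
     (\<forall>u\<in>V. \<forall>v\<in>V. {u, v} \<in> E \<longrightarrow>
        arc (arc_of {u, v}) \<and>
        {pathstart (arc_of {u, v}), pathfinish (arc_of {u, v})} = {pos u, pos v} \<and>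
        path_image (arc_of {u, v}) \<inter> pos ` V = {pos u, pos v}) \<and>
     (\<forall>e\<in>E. \<forall>e'\<in>E. e \<noteq> e' \<longrightarrow>
        path_image (arc_of e) \<inter> path_image (arc_of e') \<subseteq> pos ` (e \<inter> e'))"

definition drawing ::
  "'a set \<Rightarrow> 'a set set \<Rightarrow> ('a \<Rightarrow> complex) \<Rightarrow> ('a set \<Rightarrow> real \<Rightarrow> complex) \<Rightarrow> complex set" where
  "drawing V E pos arc_of = pos ` V \<union> (\<Union>e\<in>E. path_image (arc_of e))"

definition faces ::
  "'a set \<Rightarrow> 'a set set \<Rightarrow> ('a \<Rightarrow> complex) \<Rightarrow> ('a set \<Rightarrow> real \<Rightarrow> complex) \<Rightarrow> complex set set" where
  "faces V E pos arc_of = components (- drawing V E pos arc_of)"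

definition triangulation :: "'a set \<Rightarrow> 'a set set \<Rightarrow> bool" where
  "triangulation V E \<longleftrightarrow> simple_graph V E \<and>
     (\<exists>pos arc_of. plane_embedding V E pos arc_of \<and>
        (\<forall>F\<in>faces V E pos arc_of. \<exists>a b c.
           a \<noteq> b \<and> b \<noteq> c \<and> a \<noteq> c \<and>
           {a, b} \<in> E \<and> {b, c} \<in> E \<and> {a, c} \<in> E \<and>
           frontier F = path_image (arc_of {a, b}) \<union> path_image (arc_of {b, c})
                          \<union> path_image (arc_of {a, c})))"

end

theory Submission
  imports Defs "HOL-Homology.Invariance_of_Domain"
begin

text \<open>
  Write \<open>n\<close>, \<open>e\<close>, \<open>f\<close> for the numbers of vertices, edges and faces, and \<open>e\<^sub>I\<close> for the number
  of edges meeting \<open>I\<close>. Euler's formula gives \<open>e + 2 \<le> f + n\<close>, and since every face is a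
  triangle and every edge lies on at most two faces, \<open>3 f \<le> 2 e\<close>. As \<open>I\<close> is independent,
  every triangular face has an edge avoiding \<open>I\<close>, so \<open>f \<le> 2 (e - e\<^sub>I)\<close>; the stars of the
  vertices of \<open>I\<close> are disjoint, so \<open>e\<^sub>I \<ge> 6 |I|\<close>. Hence \<open>12 |I| \<le> 2 e - f \<le> 4 n - 8\<close>.

  Both topological facts are derived from the Jordan curve theorem. Euler's inequality is
  proved by drawing the edges one at a time: an arc attached to a closed set at its two
  endpoints never decreases the number of complementary regions, and increases it if its
  endpoints are already joined, since it then closes a Jordan curve. An edge lies on at most
  two faces because three arcs with common endpoints (a theta graph) cut the plane into three
  regions whose boundaries have only the two endpoints in common.
\<close>

section \<open>Jordan curves and theta graphs\<close>

lemma connected_subset_if_frontier_disjoint: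
  assumes "connected X" "X \<inter> frontier Y = {}" "X \<inter> Y \<noteq> {}"
  shows "X \<subseteq> Y"
  using connected_Int_frontier[of X Y] assms by blast

lemma connected_subset_open_if_closure_meets:
  assumes "connected X" "X \<inter> frontier U = {}" "open U" "U \<inter> closure X \<noteq> {}"
  shows "X \<subseteq> U"
  using assms open_Int_closure_eq_empty[of U X]
  by (intro connected_subset_if_frontier_disjoint) auto

lemma interior_arc_image_empty:
  fixes g :: "real \<Rightarrow> 'a::euclidean_space"
  assumes "arc g" "2 \<le> DIM('a)"
  shows "interior (path_image g) = {}"
  using assms homeomorphic_arc_image_interval[of g 0 1]
  by (intro empty_interior_lowdim_gen[where T = "{0..1::real}"]) auto

lemma infinite_arc_image:
  assumes "arc g"
  shows "infinite (path_image g)"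
  using assms by (auto simp: arc_def path_image_def finite_image_iff)

definition jordan_curve :: "complex set \<Rightarrow> bool" where
  "jordan_curve J \<longleftrightarrow> (\<exists>c. simple_path c \<and> pathfinish c = pathstart c \<and> path_image c = J)"

lemma
  assumes "jordan_curve J"
  shows jordan_curve_inside: "open (inside J)" "connected (inside J)" "inside J \<noteq> {}" "bounded (inside J)"
    and jordan_curve_outside: "open (outside J)" "connected (outside J)" "outside J \<noteq> {}"
    and jordan_curve_frontier_inside: "frontier (inside J) = J"
    and jordan_curve_frontier_outside: "frontier (outside J) = J"
proof -
  obtain c where c: "simple_path c" "pathfinish c = pathstart c" "path_image c = J"
    using assms unfolding jordan_curve_def by blast
  show "open (inside J)" "connected (inside J)" "inside J \<noteq> {}" "bounded (inside J)"
    "open (outside J)" "connected (outside J)" "outside J \<noteq> {}"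
    "frontier (inside J) = J" "frontier (outside J) = J"
    using Jordan_inside_outside[OF c(1,2)] unfolding c(3) by auto
qed

lemma jordan_curve_closure_inside: "jordan_curve J \<Longrightarrow> closure (inside J) = inside J \<union> J"
  by (metis closure_Un_frontier jordan_curve_frontier_inside)

lemma jordan_curve_closure_outside: "jordan_curve J \<Longrightarrow> closure (outside J) = outside J \<union> J"
  by (metis closure_Un_frontier jordan_curve_frontier_outside)

lemma jordan_curve_Compl_closure_inside: "jordan_curve J \<Longrightarrow> - closure (inside J) = outside J"
  by (auto simp: jordan_curve_closure_inside outside_inside)

lemma jordan_curve_two_arcs:
  fixes c1 c2 :: "real \<Rightarrow> complex"
  assumes "arc c1" "arc c2" "pathstart c1 = a" "pathfinish c1 = b"
    "pathstart c2 = a" "pathfinish c2 = b" "path_image c1 \<inter> path_image c2 \<subseteq> {a, b}"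
  shows "jordan_curve (path_image c1 \<union> path_image c2)"
  unfolding jordan_curve_def
  using assms
  by (intro exI[of _ "c1 +++ reversepath c2"])
     (auto simp: simple_path_join_loop_eq arc_reversepath path_image_join)

lemma jordan_curve_component_eq_inside_or_outside:
  assumes "open F" "connected F" "F \<noteq> {}" "frontier F = J" "jordan_curve J"
  shows "F = inside J \<or> F = outside J"
proof -
  have FJ: "F \<inter> J = {}"
    using assms(1,4) by (auto simp: frontier_def interior_open)
  show ?thesis
  proof (cases "F \<inter> inside J = {}")
    case False
    have "F \<subseteq> inside J"
      using assms(2,5) FJ False
      by (intro connected_subset_if_frontier_disjoint) (auto simp: jordan_curve_frontier_inside)
    moreover have "inside J \<subseteq> F"
      using assms(4,5) FJ False inside_no_overlap[of J]
      by (intro connected_subset_if_frontier_disjoint jordan_curve_inside) auto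
    ultimately show ?thesis by blast
  next
    case True
    then have "F \<subseteq> outside J"
      using FJ inside_Un_outside[of J] by blast
    moreover from this have "outside J \<subseteq> F"
      using assms(3,4,5) outside_no_overlap[of J]
      by (intro connected_subset_if_frontier_disjoint jordan_curve_outside) auto
    ultimately show ?thesis by blast
  qed
qed

definition theta_graph ::
  "(real \<Rightarrow> complex) \<Rightarrow> (real \<Rightarrow> complex) \<Rightarrow> (real \<Rightarrow> complex) \<Rightarrow> complex \<Rightarrow> complex \<Rightarrow> bool" where
  "theta_graph c0 c1 c2 a b \<longleftrightarrow> a \<noteq> b \<and>
     (\<forall>c\<in>{c0, c1, c2}. arc c \<and> pathstart c = a \<and> pathfinish c = b) \<and>
     path_image c0 \<inter> path_image c1 = {a, b} \<and> path_image c0 \<inter> path_image c2 = {a, b} \<and>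
     path_image c1 \<inter> path_image c2 = {a, b}"

lemma theta_graph_swap:
  assumes "theta_graph c0 c1 c2 a b"
  shows theta_graph_swap01: "theta_graph c1 c0 c2 a b"
    and theta_graph_swap12: "theta_graph c0 c2 c1 a b"
  using assms unfolding theta_graph_def by (auto simp: insert_commute Int_commute)

lemma theta_graph_jordan_curve:
  assumes "theta_graph c0 c1 c2 a b"
  shows "jordan_curve (path_image c0 \<union> path_image c1)"
  using assms unfolding theta_graph_def by (intro jordan_curve_two_arcs[of c0 c1 a b]) auto

lemma theta_graph_arc_interior_point:
  assumes "theta_graph c0 c1 c2 a b"
  obtains z where "z \<in> path_image c0" "z \<notin> path_image c1" "z \<notin> path_image c2"
proof -
  have "arc c0" "pathstart c0 = a" "pathfinish c0 = b"
    using assms unfolding theta_graph_def by auto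
  then obtain z where "z \<in> path_image c0" "z \<noteq> a" "z \<noteq> b"
    using nonempty_simple_path_endless[OF arc_imp_simple_path] by blast
  with assms that show ?thesis
    unfolding theta_graph_def by blast
qed

lemma theta_graph_inside_subset_outside:
  assumes theta: "theta_graph c0 c1 c2 a b"
    and "path_image c2 \<inter> inside (path_image c0 \<union> path_image c1) = {}"
    and "path_image c1 \<inter> inside (path_image c0 \<union> path_image c2) = {}"
  shows "inside (path_image c0 \<union> path_image c1) \<subseteq> outside (path_image c0 \<union> path_image c2)"
proof -
  let ?J1 = "path_image c0 \<union> path_image c1" and ?J2 = "path_image c0 \<union> path_image c2"
  have J1: "jordan_curve ?J1" and J2: "jordan_curve ?J2"
    using theta theta_graph_jordan_curve theta_graph_swap12 by blast+
  obtain z where z: "z \<in> path_image c1" "z \<notin> path_image c0" "z \<notin> path_image c2"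
    using theta_graph_arc_interior_point[OF theta_graph_swap01[OF theta]] by blast
  with assms(3) have "z \<in> outside ?J2"
    using inside_Un_outside[of ?J2] by blast
  moreover have "z \<in> closure (inside ?J1)"
    using z J1 jordan_curve_closure_inside by blast
  moreover have "inside ?J1 \<inter> ?J2 = {}"
    using assms(2) inside_no_overlap[of ?J1] by blast
  ultimately show ?thesis
    using J1 J2
    by (intro connected_subset_open_if_closure_meets jordan_curve_inside jordan_curve_outside)
       (auto simp: jordan_curve_frontier_outside)
qed

lemma theta_graph_middle_arc:
  assumes theta: "theta_graph c0 c1 c2 a b"
  shows "path_image c0 \<inter> inside (path_image c1 \<union> path_image c2) \<noteq> {} \<or>
         path_image c1 \<inter> inside (path_image c0 \<union> path_image c2) \<noteq> {} \<or>
         path_image c2 \<inter> inside (path_image c0 \<union> path_image c1) \<noteq> {}"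
proof (rule ccontr)
  txt \<open>Otherwise the closed insides \<open>A\<close>, \<open>B\<close> of \<open>c0 \<union> c1\<close> and \<open>c0 \<union> c2\<close> meet exactly in \<open>c0\<close>,
    so by Janiszewski's theorem the complement of \<open>A \<union> B\<close> is connected; it then lies in the
    bounded inside of \<open>c1 \<union> c2\<close>, and the whole plane would be bounded.\<close>
  let ?T0 = "path_image c0" and ?T1 = "path_image c1" and ?T2 = "path_image c2"
  assume "\<not> ?thesis"
  then have H0: "?T0 \<inter> inside (?T1 \<union> ?T2) = {}"
    and H1: "?T1 \<inter> inside (?T0 \<union> ?T2) = {}"
    and H2: "?T2 \<inter> inside (?T0 \<union> ?T1) = {}" by auto
  have J01: "jordan_curve (?T0 \<union> ?T1)" and J02: "jordan_curve (?T0 \<union> ?T2)"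
    and J12: "jordan_curve (?T1 \<union> ?T2)"
    using theta theta_graph_jordan_curve theta_graph_swap theta_graph_swap01[OF theta_graph_swap12]
    by blast+
  have theta120: "theta_graph c1 c2 c0 a b" and theta210: "theta_graph c2 c1 c0 a b"
    using theta theta_graph_swap by blast+
  have U01: "inside (?T1 \<union> ?T2) \<subseteq> outside (?T0 \<union> ?T1)"
    using theta_graph_inside_subset_outside[OF theta120] H0 H2 by (simp add: Un_commute)
  have U02: "inside (?T1 \<union> ?T2) \<subseteq> outside (?T0 \<union> ?T2)"
    using theta_graph_inside_subset_outside[OF theta210] H0 H1 by (simp add: Un_commute)
  have I01: "inside (?T0 \<union> ?T1) \<subseteq> outside (?T0 \<union> ?T2)"
    using theta_graph_inside_subset_outside[OF theta] H1 H2 by simp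
  define A where "A = closure (inside (?T0 \<union> ?T1))"
  define B where "B = closure (inside (?T0 \<union> ?T2))"
  have A: "A = inside (?T0 \<union> ?T1) \<union> (?T0 \<union> ?T1)" "- A = outside (?T0 \<union> ?T1)"
    unfolding A_def using J01 jordan_curve_closure_inside jordan_curve_Compl_closure_inside by auto
  have B: "B = inside (?T0 \<union> ?T2) \<union> (?T0 \<union> ?T2)" "- B = outside (?T0 \<union> ?T2)"
    unfolding B_def using J02 jordan_curve_closure_inside jordan_curve_Compl_closure_inside by auto
  have "?T1 \<inter> ?T2 \<subseteq> ?T0"
    using theta unfolding theta_graph_def by auto
  then have "A \<inter> B = ?T0"
    unfolding A B using I01 H1 H2 inside_Int_outside[of "?T0 \<union> ?T2"]
      inside_no_overlap[of "?T0 \<union> ?T1"] inside_no_overlap[of "?T0 \<union> ?T2"] by blast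
  moreover have "compact A" "closed B"
    unfolding A_def B_def using J01 jordan_curve_inside(4) by (auto simp: compact_closure)
  moreover have "connected ?T0"
    using theta unfolding theta_graph_def by (simp add: connected_path_image arc_imp_path)
  ultimately have "connected (- (A \<union> B))"
    using J01 J02 jordan_curve_outside(2) by (intro Janiszewski_connected) (auto simp: A(2) B(2))
  moreover have "- (A \<union> B) \<inter> frontier (inside (?T1 \<union> ?T2)) = {}"
    unfolding jordan_curve_frontier_inside[OF J12] A(1) B(1) by blast
  moreover have "- (A \<union> B) \<inter> inside (?T1 \<union> ?T2) \<noteq> {}"
    using U01 U02 jordan_curve_inside(3)[OF J12] A(2) B(2) by blast
  ultimately have "- (A \<union> B) \<subseteq> inside (?T1 \<union> ?T2)"
    by (rule connected_subset_if_frontier_disjoint)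
  then have "UNIV \<subseteq> inside (?T1 \<union> ?T2) \<union> A \<union> B"
    by blast
  moreover have "bounded (inside (?T1 \<union> ?T2) \<union> A \<union> B)"
    using J01 J02 J12 jordan_curve_inside(4) unfolding A_def B_def by (simp add: bounded_closure)
  ultimately show False
    using not_bounded_UNIV bounded_subset by blast
qed

lemma theta_graph_components_middle:
  assumes theta: "theta_graph c0 c1 c2 a b"
    and middle: "path_image c0 \<inter> inside (path_image c1 \<union> path_image c2) \<noteq> {}"
  obtains R0 R1 R2 where
    "components (- (path_image c0 \<union> path_image c1 \<union> path_image c2)) = {R0, R1, R2}"
    "frontier R0 \<inter> frontier R1 \<inter> frontier R2 \<subseteq> {a, b}"
proof -
  let ?T0 = "path_image c0" and ?T1 = "path_image c1" and ?T2 = "path_image c2"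
  have J01: "jordan_curve (?T0 \<union> ?T1)" and J02: "jordan_curve (?T0 \<union> ?T2)"
    and J12: "jordan_curve (?T1 \<union> ?T2)"
    using theta theta_graph_jordan_curve theta_graph_swap theta_graph_swap01[OF theta_graph_swap12]
    by blast+
  have ends: "pathstart c = a" "pathfinish c = b" "simple_path c" if "c \<in> {c0, c1, c2}" for c
    using theta that unfolding theta_graph_def by (auto intro: arc_imp_simple_path)
  have "a \<noteq> b" and Int: "?T0 \<inter> ?T1 = {a, b}" "?T0 \<inter> ?T2 = {a, b}" "?T1 \<inter> ?T2 = {a, b}"
    using theta unfolding theta_graph_def by auto
  define R0 where "R0 = inside (?T0 \<union> ?T1)"
  define R1 where "R1 = inside (?T0 \<union> ?T2)"
  define R2 where "R2 = outside (?T1 \<union> ?T2)"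
  obtain "inside (?T1 \<union> ?T0) \<inter> inside (?T2 \<union> ?T0) = {}"
    "inside (?T1 \<union> ?T0) \<union> inside (?T2 \<union> ?T0) \<union> (?T0 - {a, b}) = inside (?T1 \<union> ?T2)"
    by (rule split_inside_simple_closed_curve[of c1 a b c2 c0])
       (use ends middle Int \<open>a \<noteq> b\<close> in \<open>auto simp: Int_commute\<close>)
  then have split: "R0 \<inter> R1 = {}" "R0 \<union> R1 \<union> (?T0 - {a, b}) = inside (?T1 \<union> ?T2)"
    unfolding R0_def R1_def by (simp_all add: Un_commute)
  have R01: "R0 \<inter> (?T0 \<union> ?T1) = {}" "R1 \<inter> (?T0 \<union> ?T2) = {}"
    unfolding R0_def R1_def by (rule inside_no_overlap)+
  have I12: "inside (?T1 \<union> ?T2) \<inter> (?T1 \<union> ?T2) = {}"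
    by (rule inside_no_overlap)
  have "a \<in> ?T1" "b \<in> ?T1"
    using Int by blast+
  then have R01_eq: "R0 \<union> R1 = inside (?T1 \<union> ?T2) - ?T0"
    using split R01 I12 by blast
  have "?T0 \<subseteq> inside (?T1 \<union> ?T2) \<union> ?T1"
    using split(2) Int by blast
  then have "R2 \<inter> ?T0 = {}"
    unfolding R2_def using inside_Int_outside[of "?T1 \<union> ?T2"] outside_no_overlap[of "?T1 \<union> ?T2"]
    by blast
  then have "R0 \<union> R1 \<union> R2 = - (?T0 \<union> ?T1 \<union> ?T2)"
    unfolding R01_eq R2_def using inside_Un_outside[of "?T1 \<union> ?T2"] by blast
  moreover have "pairwise disjnt {R0, R1, R2}"
    using split(1) R01_eq inside_Int_outside[of "?T1 \<union> ?T2"]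
    unfolding pairwise_def disjnt_def R2_def by blast
  moreover have "open R \<and> connected R \<and> R \<noteq> {}" if "R \<in> {R0, R1, R2}" for R
    using that J01 J02 J12 unfolding R0_def R1_def R2_def
    by (auto simp: jordan_curve_inside jordan_curve_outside)
  ultimately have "components (- (?T0 \<union> ?T1 \<union> ?T2)) = {R0, R1, R2}"
    by (intro components_open_unique) auto
  moreover have "frontier R0 \<inter> frontier R1 \<inter> frontier R2 \<subseteq> {a, b}"
    using J01 J02 J12 Int unfolding R0_def R1_def R2_def
    by (auto simp: jordan_curve_frontier_inside jordan_curve_frontier_outside)
  ultimately show ?thesis
    by (rule that)
qed

lemma theta_graph_components:
  assumes theta: "theta_graph c0 c1 c2 a b"
    and R: "R0 \<in> components (- (path_image c0 \<union> path_image c1 \<union> path_image c2))"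
      "R1 \<in> components (- (path_image c0 \<union> path_image c1 \<union> path_image c2))"
      "R2 \<in> components (- (path_image c0 \<union> path_image c1 \<union> path_image c2))"
      "R0 \<noteq> R1" "R0 \<noteq> R2" "R1 \<noteq> R2"
  shows "frontier R0 \<inter> frontier R1 \<inter> frontier R2 \<subseteq> {a, b}"
proof -
  let ?T0 = "path_image c0" and ?T1 = "path_image c1" and ?T2 = "path_image c2"
  obtain S0 S1 S2 where
    S: "components (- (?T0 \<union> ?T1 \<union> ?T2)) = {S0, S1, S2}"
    "frontier S0 \<inter> frontier S1 \<inter> frontier S2 \<subseteq> {a, b}"
  proof -
    consider "?T0 \<inter> inside (?T1 \<union> ?T2) \<noteq> {}" | "?T1 \<inter> inside (?T0 \<union> ?T2) \<noteq> {}"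
      | "?T2 \<inter> inside (?T0 \<union> ?T1) \<noteq> {}"
      using theta_graph_middle_arc[OF theta] by blast
    then show ?thesis
    proof cases
      case 1
      show ?thesis
        by (rule theta_graph_components_middle[OF theta 1]) (rule that)
    next
      case 2
      have eq: "?T1 \<union> ?T0 \<union> ?T2 = ?T0 \<union> ?T1 \<union> ?T2"
        by blast
      show ?thesis
        by (rule theta_graph_components_middle[OF theta_graph_swap01[OF theta] 2])
           (rule that; simp add: eq)
    next
      case 3
      have eq: "?T2 \<union> ?T0 \<union> ?T1 = ?T0 \<union> ?T1 \<union> ?T2"
        by blast
      show ?thesis
        by (rule theta_graph_components_middle[OF theta_graph_swap01[OF theta_graph_swap12[OF theta]] 3])
           (rule that; simp add: eq)
    qed
  qed
  have "frontier R0 \<inter> frontier R1 \<inter> frontier R2 = frontier S0 \<inter> frontier S1 \<inter> frontier S2"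
    using R S(1) by auto
  with S(2) show ?thesis
    by simp
qed

lemma theta_graph_frontiers_of_components:
  assumes theta: "theta_graph c0 c1 c2 a b"
    and D: "path_image c0 \<union> path_image c1 \<union> path_image c2 \<subseteq> D"
    and F: "F0 \<in> components (- D)" "F1 \<in> components (- D)" "F2 \<in> components (- D)"
      "F0 \<noteq> F1" "F0 \<noteq> F2" "F1 \<noteq> F2"
    and frontier: "frontier F0 \<subseteq> path_image c0 \<union> path_image c1 \<union> path_image c2"
      "frontier F1 \<subseteq> path_image c0 \<union> path_image c1 \<union> path_image c2"
  shows "frontier F0 \<inter> frontier F1 \<inter> frontier F2 \<subseteq> {a, b}"
proof -
  let ?Th = "path_image c0 \<union> path_image c1 \<union> path_image c2"
  have "closed ?Th"
    using theta unfolding theta_graph_def by (auto intro: closed_path_image arc_imp_path)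
  then have "open (- ?Th)"
    by blast
  have in_Th_component: "\<exists>R\<in>components (- ?Th). F \<subseteq> R" if "F \<in> components (- D)" for F
    using that D in_components_subset[OF that] in_components_nonempty[OF that]
      in_components_connected[OF that] exists_component_superset[of F "- ?Th"] by blast
  have Th_component: "F \<in> components (- ?Th)"
    if F_component: "F \<in> components (- D)" and F_frontier: "frontier F \<subseteq> ?Th" for F
  proof -
    obtain R where R: "R \<in> components (- ?Th)" "F \<subseteq> R"
      using in_Th_component[OF F_component] by blast
    have "R \<subseteq> F"
      using R F_frontier in_components_subset[OF R(1)] in_components_nonempty[OF F_component]
      by (intro connected_subset_if_frontier_disjoint in_components_connected[OF R(1)]) auto
    with R show ?thesis by simp
  qed
  obtain R2 where R2: "R2 \<in> components (- ?Th)" "F2 \<subseteq> R2"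
    using in_Th_component[OF F(3)] by blast
  have "R2 \<noteq> F0" "R2 \<noteq> F1"
    using R2(2) F components_nonoverlap in_components_nonempty[OF F(3)] by blast+
  moreover have "frontier F2 \<inter> ?Th \<subseteq> frontier R2"
  proof -
    have "open R2"
      using R2(1) \<open>open (- ?Th)\<close> open_components by blast
    moreover have "R2 \<inter> ?Th = {}"
      using in_components_subset[OF R2(1)] by blast
    ultimately show ?thesis
      using closure_mono[OF R2(2)] by (auto simp: frontier_def interior_open)
  qed
  ultimately have "frontier F0 \<inter> frontier F1 \<inter> frontier F2 \<subseteq> frontier F0 \<inter> frontier F1 \<inter> frontier R2"
    using frontier by blast
  also have "\<dots> \<subseteq> {a, b}"
    using theta_graph_components[OF theta Th_component[OF F(1) frontier(1)]
        Th_component[OF F(2) frontier(2)] R2(1)] F(4) \<open>R2 \<noteq> F0\<close> \<open>R2 \<noteq> F1\<close> by metis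
  finally show ?thesis .
qed

section \<open>Adding an arc to a closed set\<close>

lemma components_Compl_compact_nonempty:
  fixes D :: "'a::euclidean_space set"
  assumes "compact D"
  shows "components (- D) \<noteq> {}"
proof -
  have "D \<noteq> UNIV"
    using assms compact_imp_bounded not_bounded_UNIV by metis
  then show ?thesis
    by auto
qed

lemma connected_component_Compl_Un:
  assumes "F \<in> components (- D)" "x \<in> F" "x \<notin> A"
  shows "connected_component_set (- (D \<union> A)) x \<in> components (- (D \<union> A))"
    and "connected_component_set (- (D \<union> A)) x \<subseteq> F"
proof -
  have x: "x \<in> - (D \<union> A)"
    using assms in_components_subset by blast
  then show "connected_component_set (- (D \<union> A)) x \<in> components (- (D \<union> A))"
    by (rule componentsI)
  show "connected_component_set (- (D \<union> A)) x \<subseteq> F"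
    using x assms(2) connected_component_subset[of "- (D \<union> A)" x]
    by (intro components_maximal[OF assms(1)]) auto
qed

lemma components_replace_one:
  assumes K: "K \<subseteq> components (- D)" "finite K"
    and F: "F \<in> components (- D)"
    and A: "\<And>G. G \<in> components (- D) \<Longrightarrow> G \<noteq> F \<Longrightarrow> G \<inter> A = {}"
    and N: "N \<subseteq> components (- (D \<union> A))" "finite N" "\<And>C. C \<in> N \<Longrightarrow> C \<subseteq> F"
  shows "\<exists>K'. K' \<subseteq> components (- (D \<union> A)) \<and> finite K' \<and> card K + card N \<le> card K' + 1"
proof (intro exI conjI)
  have "G \<in> components (- (D \<union> A))" if "G \<in> K" "G \<noteq> F" for G
  proof (rule components_intermediate_subset)
    show "G \<in> components (- D)"
      using that K(1) by blast
    then show "G \<subseteq> - (D \<union> A)"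
      using A[of G] that in_components_subset by blast
  qed auto
  then show "(K - {F}) \<union> N \<subseteq> components (- (D \<union> A))"
    using N(1) by blast
  show "finite ((K - {F}) \<union> N)"
    using K N by blast
  have "(K - {F}) \<inter> N = {}"
  proof -
    have "G \<notin> N" if "G \<in> K" "G \<noteq> F" for G
      using that K(1) F N(3)[of G] components_nonoverlap[of G "- D" F] in_components_nonempty[of G "- D"]
      by blast
    then show ?thesis by blast
  qed
  then have "card ((K - {F}) \<union> N) = card (K - {F}) + card N"
    using K N by (simp add: card_Un_disjoint)
  moreover have "card K \<le> card (K - {F}) + 1"
    using K(2) card_Suc_Diff1[of K F] by (cases "F \<in> K") auto
  ultimately show "card K + card N \<le> card ((K - {F}) \<union> N) + 1"
    by linarith
qed

lemma arc_interior_in_component: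
  fixes \<gamma> :: "real \<Rightarrow> complex"
  assumes "arc \<gamma>" and disj: "(path_image \<gamma> - {pathstart \<gamma>, pathfinish \<gamma>}) \<inter> D = {}"
    and ends: "pathstart \<gamma> \<in> D" "pathfinish \<gamma> \<in> D"
  obtains F where "F \<in> components (- D)" "path_image \<gamma> - {pathstart \<gamma>, pathfinish \<gamma>} \<subseteq> F"
    "\<And>G. G \<in> components (- D) \<Longrightarrow> G \<noteq> F \<Longrightarrow> G \<inter> path_image \<gamma> = {}"
proof -
  let ?A = "path_image \<gamma> - {pathstart \<gamma>, pathfinish \<gamma>}"
  have "simple_path \<gamma>"
    using \<open>arc \<gamma>\<close> by (rule arc_imp_simple_path)
  then have "connected ?A" "?A \<noteq> {}"
    by (rule connected_simple_path_endless, rule nonempty_simple_path_endless)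
  then obtain F where F: "F \<in> components (- D)" "?A \<subseteq> F"
    using exists_component_superset[of ?A "- D"] disj by blast
  moreover have "G \<inter> path_image \<gamma> = {}" if G: "G \<in> components (- D)" "G \<noteq> F" for G
  proof -
    have "G \<inter> F = {}"
      using components_nonoverlap[OF G(1) F(1)] G(2) by blast
    with F(2) in_components_subset[OF G(1)] ends show ?thesis
      by blast
  qed
  ultimately show ?thesis
    by (rule that)
qed

lemma components_add_arc:
  fixes \<gamma> :: "real \<Rightarrow> complex"
  assumes D: "closed D" and \<gamma>: "arc \<gamma>" "pathstart \<gamma> \<in> D" "pathfinish \<gamma> \<in> D"
    and disj: "(path_image \<gamma> - {pathstart \<gamma>, pathfinish \<gamma>}) \<inter> D = {}"
    and K: "K \<subseteq> components (- D)" "finite K"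
  shows "\<exists>K'. K' \<subseteq> components (- (D \<union> path_image \<gamma>)) \<and> finite K' \<and> card K \<le> card K'"
proof -
  obtain F where F: "F \<in> components (- D)" "path_image \<gamma> - {pathstart \<gamma>, pathfinish \<gamma>} \<subseteq> F"
    "\<And>G. G \<in> components (- D) \<Longrightarrow> G \<noteq> F \<Longrightarrow> G \<inter> path_image \<gamma> = {}"
    using arc_interior_in_component[OF \<gamma>(1) disj \<gamma>(2,3)] by blast
  have "\<not> F \<subseteq> path_image \<gamma>"
  proof
    assume "F \<subseteq> path_image \<gamma>"
    moreover have "open F"
      using F(1) D open_components by blast
    ultimately have "F \<subseteq> interior (path_image \<gamma>)"
      by (rule interior_maximal)
    then show False
      using interior_arc_image_empty[OF \<gamma>(1)] in_components_nonempty[OF F(1)] by simp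
  qed
  then obtain x where x: "x \<in> F" "x \<notin> path_image \<gamma>"
    by blast
  let ?C = "connected_component_set (- (D \<union> path_image \<gamma>)) x"
  have "\<exists>K'. K' \<subseteq> components (- (D \<union> path_image \<gamma>)) \<and> finite K' \<and> card K + card {?C} \<le> card K' + 1"
    by (rule components_replace_one[OF K F(1) F(3)])
       (use connected_component_Compl_Un[OF F(1) x] in auto)
  then show ?thesis
    by simp
qed

lemma jordan_curve_meets_both_sides:
  assumes "jordan_curve J" "p \<in> J" "open U" "p \<in> U"
  shows "U \<inter> inside J \<noteq> {}" "U \<inter> outside J \<noteq> {}"
  using assms open_Int_closure_eq_empty[of U "inside J"] open_Int_closure_eq_empty[of U "outside J"]
  by (auto simp: jordan_curve_closure_inside jordan_curve_closure_outside)

lemma components_add_arc_closing_cycle: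
  fixes \<gamma> g :: "real \<Rightarrow> complex"
  assumes D: "closed D" and \<gamma>: "arc \<gamma>" "pathstart \<gamma> \<in> D" "pathfinish \<gamma> \<in> D"
    and disj: "(path_image \<gamma> - {pathstart \<gamma>, pathfinish \<gamma>}) \<inter> D = {}"
    and K: "K \<subseteq> components (- D)" "finite K"
    and g: "arc g" "path_image g \<subseteq> D" "pathstart g = pathstart \<gamma>" "pathfinish g = pathfinish \<gamma>"
  shows "\<exists>K'. K' \<subseteq> components (- (D \<union> path_image \<gamma>)) \<and> finite K' \<and> card K + 1 \<le> card K'"
proof -
  let ?A = "path_image \<gamma>" and ?J = "path_image \<gamma> \<union> path_image g"
  obtain F where F: "F \<in> components (- D)" "?A - {pathstart \<gamma>, pathfinish \<gamma>} \<subseteq> F"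
    "\<And>G. G \<in> components (- D) \<Longrightarrow> G \<noteq> F \<Longrightarrow> G \<inter> ?A = {}"
    using arc_interior_in_component[OF \<gamma>(1) disj \<gamma>(2,3)] by blast
  have J: "jordan_curve ?J"
    using \<gamma> g disj by (intro jordan_curve_two_arcs) auto
  obtain p where p: "p \<in> ?A - {pathstart \<gamma>, pathfinish \<gamma>}"
    using nonempty_simple_path_endless[OF arc_imp_simple_path[OF \<gamma>(1)]] by blast
  have "open F"
    using F(1) D open_components by blast
  then have "F \<inter> inside ?J \<noteq> {}" "F \<inter> outside ?J \<noteq> {}"
    using jordan_curve_meets_both_sides[OF J, of p F] p F(2) by blast+
  then obtain x1 x2 where x: "x1 \<in> F" "x1 \<in> inside ?J" "x2 \<in> F" "x2 \<in> outside ?J"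
    by blast
  have x1: "x1 \<in> F" "x1 \<notin> ?A" and x2: "x2 \<in> F" "x2 \<notin> ?A"
    using x inside_no_overlap[of ?J] outside_no_overlap[of ?J] by blast+
  let ?C1 = "connected_component_set (- (D \<union> ?A)) x1"
    and ?C2 = "connected_component_set (- (D \<union> ?A)) x2"
  have "x1 \<in> ?C1"
    using x1 in_components_subset[OF F(1)] by auto
  then have "?C1 \<inter> inside ?J \<noteq> {}"
    using x(2) by blast
  moreover have "?C1 \<inter> frontier (inside ?J) = {}"
    using g(2) connected_component_subset[of "- (D \<union> ?A)" x1]
    by (auto simp: jordan_curve_frontier_inside[OF J])
  ultimately have "?C1 \<subseteq> inside ?J"
    by (intro connected_subset_if_frontier_disjoint connected_connected_component)
  moreover have "x2 \<in> ?C2"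
    using x2 in_components_subset[OF F(1)] by auto
  ultimately have "?C1 \<noteq> ?C2"
    using x(4) inside_Int_outside[of ?J] by blast
  then have "card {?C1, ?C2} = 2"
    by simp
  moreover have "\<exists>K'. K' \<subseteq> components (- (D \<union> ?A)) \<and> finite K' \<and> card K + card {?C1, ?C2} \<le> card K' + 1"
    by (rule components_replace_one[OF K F(1) F(3)])
       (use connected_component_Compl_Un[OF F(1) x1] connected_component_Compl_Un[OF F(1) x2] in auto)
  ultimately show ?thesis
    by simp
qed

section \<open>Connected components of a graph\<close>

definition edge_relation :: "'a set set \<Rightarrow> ('a \<times> 'a) set" where
  "edge_relation S = {(x, y). {x, y} \<in> S}"

definition graph_components :: "'a set \<Rightarrow> 'a set set \<Rightarrow> 'a set set" where
  "graph_components V S = (\<lambda>x. {y \<in> V. (x, y) \<in> (edge_relation S)\<^sup>*}) ` V"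

lemma sym_edge_relation: "sym (edge_relation S)"
  unfolding edge_relation_def sym_def by (simp add: insert_commute)

lemma edge_relation_class_eq:
  assumes "(x, y) \<in> (edge_relation S)\<^sup>*"
  shows "{z \<in> V. (x, z) \<in> (edge_relation S)\<^sup>*} = {z \<in> V. (y, z) \<in> (edge_relation S)\<^sup>*}"
proof -
  have "(y, x) \<in> (edge_relation S)\<^sup>*"
    using assms sym_rtrancl[OF sym_edge_relation] by (meson symD)
  with assms show ?thesis
    by (auto intro: rtrancl_trans)
qed

lemma card_graph_components_empty: "finite V \<Longrightarrow> card (graph_components V {}) = card V"
  unfolding graph_components_def edge_relation_def
  by (subst card_image) (auto simp: inj_on_def)

lemma graph_components_insert_connected:
  assumes "(u, v) \<in> (edge_relation S)\<^sup>*"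
  shows "graph_components V (insert {u, v} S) = graph_components V S"
proof -
  have "(v, u) \<in> (edge_relation S)\<^sup>*"
    using assms sym_rtrancl[OF sym_edge_relation] by (meson symD)
  with assms have "edge_relation (insert {u, v} S) \<subseteq> (edge_relation S)\<^sup>*"
    by (auto simp: edge_relation_def doubleton_eq_iff)
  moreover have "edge_relation S \<subseteq> edge_relation (insert {u, v} S)"
    by (auto simp: edge_relation_def)
  ultimately have "(edge_relation (insert {u, v} S))\<^sup>* = (edge_relation S)\<^sup>*"
    by (meson rtrancl_subset_rtrancl rtrancl_mono subset_antisym)
  then show ?thesis
    unfolding graph_components_def by simp
qed

lemma card_graph_components_insert_bridge:
  assumes "finite V" "u \<in> V" "v \<in> V" "(u, v) \<notin> (edge_relation S)\<^sup>*"
  shows "card (graph_components V (insert {u, v} S)) < card (graph_components V S)"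
proof -
  let ?R = "(edge_relation S)\<^sup>*" and ?R' = "(edge_relation (insert {u, v} S))\<^sup>*"
  define c where "c x = {y \<in> V. (x, y) \<in> ?R}" for x
  define c' where "c' x = {y \<in> V. (x, y) \<in> ?R'}" for x
  txt \<open>\<open>\<phi>\<close> maps the old classes onto the new ones and identifies the classes of \<open>u\<close> and \<open>v\<close>.\<close>
  define \<phi> where "\<phi> C = {y \<in> V. \<exists>x\<in>C. (x, y) \<in> ?R'}" for C
  have RR': "?R \<subseteq> ?R'"
    by (rule rtrancl_mono) (auto simp: edge_relation_def)
  have \<phi>c: "\<phi> (c x) = c' x" if "x \<in> V" for x
    using that RR' unfolding \<phi>_def c_def c'_def by (auto intro: rtrancl_trans)
  have "(u, v) \<in> ?R'"
    by (auto simp: edge_relation_def)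
  then have "\<phi> (c u) = \<phi> (c v)"
    using \<phi>c assms(2,3) edge_relation_class_eq[where V = V] unfolding c'_def by simp
  moreover have "c u \<noteq> c v"
    using assms(3,4) rtrancl.rtrancl_refl[of v] unfolding c_def by blast
  ultimately have "\<not> inj_on \<phi> (c ` V)"
    using assms(2,3) by (auto dest: inj_onD)
  moreover have "finite (c ` V)"
    using assms(1) by simp
  ultimately have "card (\<phi> ` c ` V) < card (c ` V)"
    using card_image_le[of "c ` V" \<phi>] inj_on_iff_eq_card[of "c ` V" \<phi>] by linarith
  moreover have "c' ` V = \<phi> ` c ` V"
    using \<phi>c by (simp add: image_image)
  ultimately show ?thesis
    unfolding graph_components_def c_def c'_def by simp
qed

section \<open>Plane graphs and Euler's inequality\<close>

locale plane_graph =
  fixes V :: "'a set" and E :: "'a set set"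
    and pos :: "'a \<Rightarrow> complex" and arc_of :: "'a set \<Rightarrow> real \<Rightarrow> complex"
  assumes simple: "simple_graph V E"
    and embedding: "plane_embedding V E pos arc_of"
begin

abbreviation curve :: "'a set \<Rightarrow> complex set" where
  "curve e \<equiv> path_image (arc_of e)"

lemma finite_vertices: "finite V"
  using simple unfolding simple_graph_def by blast

lemma edgeE:
  assumes "e \<in> E"
  obtains u v where "e = {u, v}" "u \<in> V" "v \<in> V" "u \<noteq> v"
  using assms simple unfolding simple_graph_def by blast

lemma edge_vertices:
  assumes "{u, v} \<in> E"
  shows "u \<in> V" "v \<in> V" "u \<noteq> v"
  using edgeE[OF assms] by (metis doubleton_eq_iff)+

lemma finite_edges: "finite E"
proof -
  have "E \<subseteq> Pow V"
    by (auto elim: edgeE)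
  then show ?thesis
    using finite_vertices by (meson finite_Pow_iff finite_subset)
qed

lemma inj_pos: "inj_on pos V"
  using embedding unfolding plane_embedding_def by blast

lemma pos_neq: "{u, v} \<in> E \<Longrightarrow> pos u \<noteq> pos v"
  using edge_vertices inj_pos by (meson inj_on_contraD)

lemma edge_curve:
  assumes "{u, v} \<in> E"
  shows "arc (arc_of {u, v})"
    "{pathstart (arc_of {u, v}), pathfinish (arc_of {u, v})} = {pos u, pos v}"
    "curve {u, v} \<inter> pos ` V = {pos u, pos v}"
  using embedding[unfolded plane_embedding_def, THEN conjunct2, THEN conjunct1]
    edge_vertices[OF assms] assms by blast+

lemma
  assumes "e \<in> E"
  shows edge_arc: "arc (arc_of e)"
    and edge_ends: "{pathstart (arc_of e), pathfinish (arc_of e)} = pos ` e"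
    and curve_Int_vertices: "curve e \<inter> pos ` V = pos ` e"
proof -
  obtain u v where "e = {u, v}"
    using edgeE[OF assms] by metis
  then show "arc (arc_of e)" "{pathstart (arc_of e), pathfinish (arc_of e)} = pos ` e"
    "curve e \<inter> pos ` V = pos ` e"
    using edge_curve[of u v] assms by auto
qed

lemma curves_Int: "e \<in> E \<Longrightarrow> e' \<in> E \<Longrightarrow> e \<noteq> e' \<Longrightarrow> curve e \<inter> curve e' \<subseteq> pos ` (e \<inter> e')"
  using embedding unfolding plane_embedding_def by blast

lemma edge_arc_from_to:
  assumes "{u, v} \<in> E"
  obtains g where "arc g" "path_image g = curve {u, v}" "pathstart g = pos u" "pathfinish g = pos v"
proof (cases "pathstart (arc_of {u, v}) = pos u")
  case True
  then have "pathfinish (arc_of {u, v}) = pos v"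
    using edge_curve(2)[OF assms] pos_neq[OF assms] by (auto simp: doubleton_eq_iff)
  then show ?thesis
    using that[of "arc_of {u, v}"] True edge_curve(1)[OF assms] by simp
next
  case False
  then have "pathstart (arc_of {u, v}) = pos v" "pathfinish (arc_of {u, v}) = pos u"
    using edge_curve(2)[OF assms] by (auto simp: doubleton_eq_iff)
  then show ?thesis
    using that[of "reversepath (arc_of {u, v})"] edge_curve(1)[OF assms] by (simp add: arc_reversepath)
qed

lemma two_edge_arc:
  assumes "{u, w} \<in> E" "{w, v} \<in> E" "u \<noteq> v"
  obtains g where "arc g" "path_image g = curve {u, w} \<union> curve {w, v}"
    "pathstart g = pos u" "pathfinish g = pos v"
proof -
  obtain g1 where g1: "arc g1" "path_image g1 = curve {u, w}" "pathstart g1 = pos u" "pathfinish g1 = pos w"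
    using edge_arc_from_to[OF assms(1)] by blast
  obtain g2 where g2: "arc g2" "path_image g2 = curve {w, v}" "pathstart g2 = pos w" "pathfinish g2 = pos v"
    using edge_arc_from_to[OF assms(2)] by blast
  have ne: "{u, w} \<noteq> {w, v}" and int: "{u, w} \<inter> {w, v} = {w}"
    using edge_vertices assms by (auto simp: doubleton_eq_iff)
  have "path_image g1 \<inter> path_image g2 \<subseteq> {pathstart g2}"
    using curves_Int[OF assms(1,2) ne] unfolding g1(2) g2(2) g2(3) int by simp
  then have "arc (g1 +++ g2)"
    using arc_join[OF g1(1) g2(1)] g1 g2 by simp
  then show ?thesis
    using that[of "g1 +++ g2"] g1 g2 by (simp add: path_image_join)
qed

lemma compact_drawing:
  assumes "S \<subseteq> E"
  shows "compact (drawing V S pos arc_of)"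
proof -
  have "compact (\<Union>e\<in>S. curve e)"
    using assms finite_subset[OF assms finite_edges] edge_arc
    by (intro compact_UN) (auto intro: arc_imp_path)
  then show ?thesis
    unfolding drawing_def using finite_vertices by (simp add: compact_Un finite_imp_compact)
qed

lemma drawing_insert: "drawing V (insert e S) pos arc_of = drawing V S pos arc_of \<union> curve e"
  unfolding drawing_def by blast

lemma edge_attaches_to_drawing:
  assumes "e \<in> E" "S \<subseteq> E" "e \<notin> S"
  shows "pathstart (arc_of e) \<in> drawing V S pos arc_of" "pathfinish (arc_of e) \<in> drawing V S pos arc_of"
    and "(curve e - {pathstart (arc_of e), pathfinish (arc_of e)}) \<inter> drawing V S pos arc_of = {}"
proof -
  have "{pathstart (arc_of e), pathfinish (arc_of e)} \<subseteq> pos ` V"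
    unfolding edge_ends[OF assms(1)] using assms(1) by (auto elim: edgeE)
  then show "pathstart (arc_of e) \<in> drawing V S pos arc_of" "pathfinish (arc_of e) \<in> drawing V S pos arc_of"
    unfolding drawing_def by blast+
  show "(curve e - {pathstart (arc_of e), pathfinish (arc_of e)}) \<inter> drawing V S pos arc_of = {}"
    using curve_Int_vertices[OF assms(1)] curves_Int[OF assms(1)] edge_ends[OF assms(1)] assms(2,3)
    unfolding drawing_def by blast
qed

lemma path_in_drawing:
  assumes "S \<subseteq> E" "(x, y) \<in> (edge_relation S)\<^sup>*" "x \<in> V"
  shows "\<exists>g. path g \<and> path_image g \<subseteq> drawing V S pos arc_of \<and> pathstart g = pos x \<and> pathfinish g = pos y"
  using assms(2)
proof (induction rule: rtrancl_induct)
  case base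
  show ?case
    using assms(3) unfolding drawing_def
    by (intro exI[of _ "linepath (pos x) (pos x)"]) (auto simp: path_def pathstart_def pathfinish_def)
next
  case (step y z)
  then obtain g where g: "path g" "path_image g \<subseteq> drawing V S pos arc_of"
    "pathstart g = pos x" "pathfinish g = pos y"
    by blast
  have "{y, z} \<in> S"
    using step(2) unfolding edge_relation_def by blast
  moreover obtain h where h: "arc h" "path_image h = curve {y, z}" "pathstart h = pos y" "pathfinish h = pos z"
    using edge_arc_from_to assms(1) calculation by blast
  ultimately show ?case
    using g unfolding drawing_def
    by (intro exI[of _ "g +++ h"]) (auto simp: arc_imp_path path_image_join)
qed

lemma arc_in_drawing_joining_ends:
  assumes "S \<subseteq> E" "{u, v} \<in> E" "(u, v) \<in> (edge_relation S)\<^sup>*"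
  obtains g where "arc g" "path_image g \<subseteq> drawing V S pos arc_of"
    "pathstart g = pathstart (arc_of {u, v})" "pathfinish g = pathfinish (arc_of {u, v})"
proof -
  have "(v, u) \<in> (edge_relation S)\<^sup>*"
    using assms(3) sym_rtrancl[OF sym_edge_relation] by (meson symD)
  then obtain x y where xy: "x \<in> V" "(x, y) \<in> (edge_relation S)\<^sup>*"
    "pathstart (arc_of {u, v}) = pos x" "pathfinish (arc_of {u, v}) = pos y"
    using assms(3) edge_vertices[OF assms(2)] edge_curve(2)[OF assms(2)]
    by (auto simp: doubleton_eq_iff)
  then obtain p where "path p" "path_image p \<subseteq> drawing V S pos arc_of"
    "pathstart p = pos x" "pathfinish p = pos y"
    using path_in_drawing[OF assms(1)] by blast
  moreover have "pos x \<noteq> pos y"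
    using xy arc_distinct_ends[OF edge_curve(1)[OF assms(2)]] by simp
  ultimately show ?thesis
    using path_contains_arc[of p "pos x" "pos y"] that xy by (metis order_trans)
qed

text \<open>Euler's formula \<open>|V| - |S| + #faces = 1 + #components\<close> as an inequality. Only a finite
  set \<open>K\<close> of faces is counted, since finiteness of the set of faces is not known here.\<close>

lemma euler_inequality:
  assumes "S \<subseteq> E"
  shows "\<exists>K \<subseteq> components (- drawing V S pos arc_of).
           finite K \<and> card S + card (graph_components V S) + 1 \<le> card K + card V"
  using finite_subset[OF assms finite_edges] assms
proof (induction rule: finite_subset_induct')
  case empty
  obtain F where "F \<in> components (- drawing V {} pos arc_of)"
    using components_Compl_compact_nonempty[OF compact_drawing[of "{}"]] by blast
  then show ?case
    using card_graph_components_empty[OF finite_vertices] by (intro exI[of _ "{F}"]) auto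
next
  case (insert e S)
  obtain K where K: "K \<subseteq> components (- drawing V S pos arc_of)" "finite K"
    "card S + card (graph_components V S) + 1 \<le> card K + card V"
    using insert.IH by blast
  obtain u v where e: "e = {u, v}" "u \<in> V" "v \<in> V"
    using edgeE[OF insert.hyps(2)] by metis
  have closed: "closed (drawing V S pos arc_of)"
    using compact_drawing[OF insert.hyps(3)] by (rule compact_imp_closed)
  note arc = edge_arc[OF insert.hyps(2)]
    and attach = edge_attaches_to_drawing[OF insert.hyps(2,3,4)]
  have card_insert: "card (insert e S) = card S + 1"
    using insert.hyps(1,4) by simp
  show ?case
  proof (cases "(u, v) \<in> (edge_relation S)\<^sup>*")
    case True
    then obtain g where "arc g" "path_image g \<subseteq> drawing V S pos arc_of"
      "pathstart g = pathstart (arc_of e)" "pathfinish g = pathfinish (arc_of e)"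
      using arc_in_drawing_joining_ends[OF insert.hyps(3)] insert.hyps(2) e(1) by blast
    then obtain K' where "K' \<subseteq> components (- drawing V (insert e S) pos arc_of)" "finite K'"
      "card K + 1 \<le> card K'"
      using components_add_arc_closing_cycle[OF closed arc attach K(1,2)]
      unfolding drawing_insert by blast
    moreover have "graph_components V (insert e S) = graph_components V S"
      unfolding e(1) using True by (rule graph_components_insert_connected)
    ultimately show ?thesis
      using K(3) card_insert by (intro exI[of _ K']) auto
  next
    case False
    obtain K' where "K' \<subseteq> components (- drawing V (insert e S) pos arc_of)" "finite K'"
      "card K \<le> card K'"
      using components_add_arc[OF closed arc attach K(1,2)] unfolding drawing_insert by blast
    moreover have "card (graph_components V (insert e S)) < card (graph_components V S)"
      unfolding e(1) using finite_vertices e(2,3) False by (rule card_graph_components_insert_bridge)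
    ultimately show ?thesis
      using K(3) card_insert by (intro exI[of _ K']) auto
  qed
qed

section \<open>Faces bounded by triangles\<close>

lemma
  assumes "F \<in> faces V E pos arc_of"
  shows open_face: "open F"
    and connected_face: "connected F"
    and face_nonempty: "F \<noteq> {}"
    and face_Int_drawing: "F \<inter> drawing V E pos arc_of = {}"
proof -
  have F: "F \<in> components (- drawing V E pos arc_of)"
    using assms unfolding faces_def .
  have "open (- drawing V E pos arc_of)"
    using compact_drawing[of E] compact_imp_closed by blast
  then show "open F"
    using F open_components by blast
  show "connected F" "F \<noteq> {}" "F \<inter> drawing V E pos arc_of = {}"
    using F in_components_connected in_components_nonempty in_components_subset by blast+
qed

lemma faces_disjoint:
  "F1 \<in> faces V E pos arc_of \<Longrightarrow> F2 \<in> faces V E pos arc_of \<Longrightarrow> F1 \<noteq> F2 \<Longrightarrow> F1 \<inter> F2 = {}"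
  unfolding faces_def using components_nonoverlap by blast

definition bounded_by_triangle :: "complex set \<Rightarrow> 'a \<Rightarrow> 'a \<Rightarrow> 'a \<Rightarrow> bool" where
  "bounded_by_triangle F a b c \<longleftrightarrow> a \<noteq> b \<and> b \<noteq> c \<and> a \<noteq> c \<and>
     {a, b} \<in> E \<and> {b, c} \<in> E \<and> {a, c} \<in> E \<and>
     frontier F = curve {a, b} \<union> curve {b, c} \<union> curve {a, c}"

lemma bounded_by_triangle_commute:
  assumes "bounded_by_triangle F a b c"
  shows bounded_by_triangle_swap12: "bounded_by_triangle F b a c"
    and bounded_by_triangle_swap23: "bounded_by_triangle F a c b"
  using assms unfolding bounded_by_triangle_def by (auto simp: insert_commute Un_ac)

lemma jordan_curve_triangle:
  assumes "a \<noteq> c" "{a, b} \<in> E" "{b, c} \<in> E" "{a, c} \<in> E"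
  shows "jordan_curve (curve {a, b} \<union> curve {b, c} \<union> curve {a, c})"
proof -
  obtain g1 where g1: "arc g1" "path_image g1 = curve {a, b} \<union> curve {b, c}"
    "pathstart g1 = pos a" "pathfinish g1 = pos c"
    using two_edge_arc[OF assms(2,3,1)] by blast
  obtain g2 where g2: "arc g2" "path_image g2 = curve {a, c}" "pathstart g2 = pos a" "pathfinish g2 = pos c"
    using edge_arc_from_to[OF assms(4)] by blast
  have "a \<noteq> b" "b \<noteq> c"
    using edge_vertices assms by blast+
  then have "curve {a, b} \<inter> curve {a, c} \<subseteq> {pos a}" "curve {b, c} \<inter> curve {a, c} \<subseteq> {pos c}"
    using curves_Int[OF assms(2,4)] curves_Int[OF assms(3,4)] assms(1) by (auto simp: doubleton_eq_iff)
  then have "path_image g1 \<inter> path_image g2 \<subseteq> {pos a, pos c}"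
    unfolding g1(2) g2(2) by blast
  then show ?thesis
    using jordan_curve_two_arcs[OF g1(1) g2(1)] g1 g2 by (simp add: Un_assoc)
qed

lemma face_eq_inside_or_outside:
  assumes "F \<in> faces V E pos arc_of" "bounded_by_triangle F a b c"
  shows "F = inside (frontier F) \<or> F = outside (frontier F)"
  using assms(2) open_face[OF assms(1)] connected_face[OF assms(1)] face_nonempty[OF assms(1)]
    jordan_curve_triangle[of a c b]
  unfolding bounded_by_triangle_def by (intro jordan_curve_component_eq_inside_or_outside) auto

definition boundary_edges :: "complex set \<Rightarrow> 'a set set" where
  "boundary_edges F = {e \<in> E. curve e \<subseteq> frontier F}"

lemma boundary_edges_triangle:
  assumes "bounded_by_triangle F a b c"
  shows "boundary_edges F = {{a, b}, {b, c}, {a, c}}"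
proof -
  have E3: "{a, b} \<in> E" "{b, c} \<in> E" "{a, c} \<in> E"
    and fr: "frontier F = curve {a, b} \<union> curve {b, c} \<union> curve {a, c}"
    using assms unfolding bounded_by_triangle_def by auto
  have "e \<in> {{a, b}, {b, c}, {a, c}}" if e: "e \<in> E" "curve e \<subseteq> frontier F" for e
  proof (rule ccontr)
    assume "e \<notin> {{a, b}, {b, c}, {a, c}}"
    then have "curve e \<subseteq> pos ` e"
      using e curves_Int[OF e(1) E3(1)] curves_Int[OF e(1) E3(2)] curves_Int[OF e(1) E3(3)]
      unfolding fr by blast
    moreover have "finite e"
      using e(1) by (auto elim: edgeE)
    ultimately show False
      using infinite_arc_image[OF edge_arc[OF e(1)]] finite_surj by blast
  qed
  then show ?thesis
    unfolding boundary_edges_def using E3 fr by blast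
qed

lemma card_boundary_edges_triangle:
  assumes "bounded_by_triangle F a b c"
  shows "card (boundary_edges F) = 3"
  using assms unfolding boundary_edges_triangle[OF assms] bounded_by_triangle_def
  by (auto simp: doubleton_eq_iff card_insert_if)

lemma bounded_by_triangle_at_edge:
  assumes "bounded_by_triangle F a b c" "{u, v} \<in> boundary_edges F"
  shows "\<exists>w. bounded_by_triangle F u v w"
proof -
  have "{u, v} = {a, b} \<or> {u, v} = {b, c} \<or> {u, v} = {a, c}"
    using assms(2) unfolding boundary_edges_triangle[OF assms(1)] by simp
  then show ?thesis
    using assms(1) bounded_by_triangle_swap12 bounded_by_triangle_swap23
    unfolding doubleton_eq_iff by metis
qed

lemma theta_graph_two_triangles:
  assumes t1: "bounded_by_triangle F1 u v w1" and t2: "bounded_by_triangle F2 u v w2"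
    and "w1 \<noteq> w2"
  obtains c0 c1 c2 where "theta_graph c0 c1 c2 (pos u) (pos v)" "path_image c0 = curve {u, v}"
    "path_image c1 = curve {u, w1} \<union> curve {w1, v}" "path_image c2 = curve {u, w2} \<union> curve {w2, v}"
proof -
  have d: "u \<noteq> v" "u \<noteq> w1" "v \<noteq> w1" "u \<noteq> w2" "v \<noteq> w2" "w1 \<noteq> w2"
    and E: "{u, v} \<in> E" "{u, w1} \<in> E" "{w1, v} \<in> E" "{u, w2} \<in> E" "{w2, v} \<in> E"
    using t1 t2 \<open>w1 \<noteq> w2\<close> unfolding bounded_by_triangle_def by (auto simp: insert_commute)
  obtain c0 where c0: "arc c0" "path_image c0 = curve {u, v}" "pathstart c0 = pos u" "pathfinish c0 = pos v"
    using edge_arc_from_to[OF E(1)] by blast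
  obtain c1 where c1: "arc c1" "path_image c1 = curve {u, w1} \<union> curve {w1, v}"
    "pathstart c1 = pos u" "pathfinish c1 = pos v"
    using two_edge_arc[OF E(2,3) d(1)] by blast
  obtain c2 where c2: "arc c2" "path_image c2 = curve {u, w2} \<union> curve {w2, v}"
    "pathstart c2 = pos u" "pathfinish c2 = pos v"
    using two_edge_arc[OF E(4,5) d(1)] by blast
  have ends: "{pos u, pos v} \<subseteq> path_image c" if "c \<in> {c0, c1, c2}" for c
    using that pathstart_in_path_image[of c] pathfinish_in_path_image[of c] c0(3,4) c1(3,4) c2(3,4)
    by auto
  have n: "{u, v} \<noteq> {u, w1}" "{u, v} \<noteq> {w1, v}" "{u, v} \<noteq> {u, w2}" "{u, v} \<noteq> {w2, v}"
    "{u, w1} \<noteq> {u, w2}" "{u, w1} \<noteq> {w2, v}" "{w1, v} \<noteq> {u, w2}" "{w1, v} \<noteq> {w2, v}"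
    using d by (auto simp: doubleton_eq_iff)
  have Int: "curve e \<inter> curve e' \<subseteq> {pos u, pos v}"
    if "e \<in> E" "e' \<in> E" "e \<noteq> e'" "e \<inter> e' \<subseteq> {u, v}" for e e'
    using curves_Int[OF that(1-3)] that(4) by blast
  have "path_image c0 \<inter> path_image c1 \<subseteq> {pos u, pos v}"
    using Int[OF E(1,2) n(1)] Int[OF E(1,3) n(2)] unfolding c0(2) c1(2) by blast
  moreover have "path_image c0 \<inter> path_image c2 \<subseteq> {pos u, pos v}"
    using Int[OF E(1,4) n(3)] Int[OF E(1,5) n(4)] unfolding c0(2) c2(2) by blast
  moreover have "path_image c1 \<inter> path_image c2 \<subseteq> {pos u, pos v}"
    using Int[OF E(2,4) n(5)] Int[OF E(2,5) n(6)] Int[OF E(3,4) n(7)] Int[OF E(3,5) n(8)] d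
    unfolding c1(2) c2(2) by blast
  ultimately have "theta_graph c0 c1 c2 (pos u) (pos v)"
    unfolding theta_graph_def using c0(1,3,4) c1(1,3,4) c2(1,3,4) pos_neq[OF E(1)] ends[of c0] ends[of c1] ends[of c2]
    by auto
  then show ?thesis
    by (rule that[OF _ c0(2) c1(2) c2(2)])
qed

lemma faces_same_triangle:
  assumes F: "F1 \<in> faces V E pos arc_of" "F2 \<in> faces V E pos arc_of" "F1 \<noteq> F2"
    and t: "bounded_by_triangle F1 a b c" "bounded_by_triangle F2 a b c"
  shows "faces V E pos arc_of = {F1, F2}"
proof -
  define J where "J = frontier F1"
  have "F1 = inside J \<or> F1 = outside J"
    using face_eq_inside_or_outside[OF F(1) t(1)] unfolding J_def .
  moreover have "frontier F2 = J"
    using t unfolding J_def bounded_by_triangle_def by simp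
  then have "F2 = inside J \<or> F2 = outside J"
    using face_eq_inside_or_outside[OF F(2) t(2)] by simp
  ultimately have in_out: "F1 \<union> F2 = - J"
    using F(3) by (elim disjE) (auto simp: Un_commute)
  have J: "J \<subseteq> drawing V E pos arc_of"
    using t(1) unfolding J_def bounded_by_triangle_def drawing_def by blast
  have "F3 \<in> {F1, F2}" if F3: "F3 \<in> faces V E pos arc_of" for F3
  proof -
    have "F3 \<subseteq> F1 \<union> F2"
      using face_Int_drawing[OF F3] J in_out by blast
    then have "F3 \<inter> F1 \<noteq> {} \<or> F3 \<inter> F2 \<noteq> {}"
      using face_nonempty[OF F3] by blast
    then show ?thesis
      using faces_disjoint[OF F3 F(1)] faces_disjoint[OF F3 F(2)] by blast
  qed
  then show ?thesis
    using F(1,2) by blast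
qed

lemma edge_not_on_third_face:
  assumes F: "F1 \<in> faces V E pos arc_of" "F2 \<in> faces V E pos arc_of" "F3 \<in> faces V E pos arc_of"
      "F1 \<noteq> F2" "F1 \<noteq> F3" "F2 \<noteq> F3"
    and t: "bounded_by_triangle F1 u v w1" "bounded_by_triangle F2 u v w2" "w1 \<noteq> w2"
  shows "{u, v} \<notin> boundary_edges F3"
proof
  assume "{u, v} \<in> boundary_edges F3"
  then have uv: "curve {u, v} \<subseteq> frontier F3"
    unfolding boundary_edges_def by blast
  obtain c0 c1 c2 where theta: "theta_graph c0 c1 c2 (pos u) (pos v)"
    and c: "path_image c0 = curve {u, v}" "path_image c1 = curve {u, w1} \<union> curve {w1, v}"
      "path_image c2 = curve {u, w2} \<union> curve {w2, v}"
    using theta_graph_two_triangles[OF t] by blast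
  let ?Th = "path_image c0 \<union> path_image c1 \<union> path_image c2"
  have fr: "frontier F1 \<subseteq> ?Th" "frontier F2 \<subseteq> ?Th"
    using t unfolding c bounded_by_triangle_def by (auto simp: insert_commute)
  have "?Th \<subseteq> drawing V E pos arc_of"
    using t unfolding c bounded_by_triangle_def drawing_def by (auto simp: insert_commute)
  then have "frontier F1 \<inter> frontier F2 \<inter> frontier F3 \<subseteq> {pos u, pos v}"
    using F fr unfolding faces_def by (intro theta_graph_frontiers_of_components[OF theta]) auto
  moreover obtain z where "z \<in> path_image c0" "z \<notin> path_image c1"
    using theta_graph_arc_interior_point[OF theta] by blast
  moreover have "pos u \<in> path_image c1" "pos v \<in> path_image c1"
    using theta unfolding theta_graph_def by auto
  ultimately show False
    using uv t unfolding c bounded_by_triangle_def by auto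
qed

end

section \<open>Counting in triangulations\<close>

lemma card_edges_meeting_independent_set:
  assumes "simple_graph V E" "I \<subseteq> V" "independent_set E I" "\<forall>v\<in>I. k \<le> degree V E v"
  shows "k * card I \<le> card {e \<in> E. e \<inter> I \<noteq> {}}"
proof -
  have "finite V"
    using assms(1) unfolding simple_graph_def by blast
  then have "finite I"
    by (rule finite_subset[OF assms(2)])
  have "E \<subseteq> Pow V"
    using assms(1) unfolding simple_graph_def by auto
  then have "finite E"
    using \<open>finite V\<close> by (meson finite_Pow_iff finite_subset)
  define star where "star v = (\<lambda>u. {v, u}) ` {u \<in> V. adjacent E v u}" for v
  have card_star: "card (star v) = degree V E v" for v
    unfolding star_def Defs.degree_def
    by (subst card_image) (auto simp: inj_on_def doubleton_eq_iff)
  have star_disjoint: "star v \<inter> star v' = {}" if "v \<in> I" "v' \<in> I" "v \<noteq> v'" for v v'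
    using that assms(3) unfolding star_def independent_set_def adjacent_def
    by (auto simp: doubleton_eq_iff)
  have "k * card I \<le> (\<Sum>v\<in>I. card (star v))"
    using assms(4) card_star sum_mono[of I "\<lambda>_. k" "\<lambda>v. card (star v)"] by (simp add: mult.commute)
  also have "\<dots> = card (\<Union>v\<in>I. star v)"
    using \<open>finite V\<close> \<open>finite I\<close> star_disjoint unfolding star_def
    by (intro card_UN_disjoint[symmetric]) auto
  also have "\<dots> \<le> card {e \<in> E. e \<inter> I \<noteq> {}}"
    using \<open>finite E\<close> unfolding star_def adjacent_def by (intro card_mono) auto
  finally show ?thesis .
qed

locale plane_triangulation = plane_graph +
  assumes triangular_faces: "F \<in> faces V E pos arc_of \<Longrightarrow> \<exists>a b c. bounded_by_triangle F a b c"
begin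

lemma finite_faces: "finite (faces V E pos arc_of)"
proof -
  define T where "T = (\<lambda>(a, b, c). curve {a, b} \<union> curve {b, c} \<union> curve {a, c}) ` (V \<times> V \<times> V)"
  have "faces V E pos arc_of \<subseteq> inside ` T \<union> outside ` T"
  proof
    fix F
    assume F: "F \<in> faces V E pos arc_of"
    then obtain a b c where t: "bounded_by_triangle F a b c"
      using triangular_faces by blast
    then have "frontier F \<in> T"
      unfolding T_def bounded_by_triangle_def using edge_vertices by blast
    then show "F \<in> inside ` T \<union> outside ` T"
      using face_eq_inside_or_outside[OF F t] by blast
  qed
  moreover have "finite T"
    unfolding T_def using finite_vertices by simp
  ultimately show ?thesis
    using finite_subset by blast
qed

lemma card_faces_at_edge_le_2:
  assumes "e \<in> E"
  shows "card {F \<in> faces V E pos arc_of. e \<in> boundary_edges F} \<le> 2"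
proof (rule ccontr)
  let ?A = "{F \<in> faces V E pos arc_of. e \<in> boundary_edges F}"
  assume "\<not> card ?A \<le> 2"
  then have "3 \<le> card ?A"
    by simp
  then obtain B where B: "B \<subseteq> ?A" "card B = 3"
    by (meson obtain_subset_with_card_n)
  then obtain F1 F2 F3 where F123: "B = {F1, F2, F3}" "F1 \<noteq> F2" "F1 \<noteq> F3" "F2 \<noteq> F3"
    unfolding card_3_iff by blast
  then have F: "F1 \<in> faces V E pos arc_of" "F2 \<in> faces V E pos arc_of" "F3 \<in> faces V E pos arc_of"
    and bd: "e \<in> boundary_edges F1" "e \<in> boundary_edges F2" "e \<in> boundary_edges F3"
    using B(1) by auto
  obtain u v where e: "e = {u, v}"
    using edgeE[OF assms] by metis
  have "\<exists>w. bounded_by_triangle F u v w"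
    if F: "F \<in> faces V E pos arc_of" and bd: "e \<in> boundary_edges F" for F
  proof -
    obtain a b c where "bounded_by_triangle F a b c"
      using triangular_faces[OF F] by blast
    then show ?thesis
      using bounded_by_triangle_at_edge bd unfolding e by blast
  qed
  then obtain w1 w2 where w: "bounded_by_triangle F1 u v w1" "bounded_by_triangle F2 u v w2"
    using F bd by meson
  show False
  proof (cases "w1 = w2")
    case True
    then have "faces V E pos arc_of = {F1, F2}"
      using faces_same_triangle[OF F(1,2) F123(2) w(1)] w(2) by simp
    then show False
      using F(3) F123(3,4) by blast
  next
    case False
    then show False
      using edge_not_on_third_face[OF F F123(2-4) w False] bd(3) unfolding e by blast
  qed
qed

lemma sum_boundary_edges_le:
  assumes "A \<subseteq> E"
  shows "(\<Sum>F\<in>faces V E pos arc_of. card {e \<in> A. e \<in> boundary_edges F}) \<le> 2 * card A"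
proof -
  have "finite A"
    using assms finite_edges finite_subset by blast
  then have "(\<Sum>F\<in>faces V E pos arc_of. card {e \<in> A. e \<in> boundary_edges F})
      = (\<Sum>e\<in>A. card {F \<in> faces V E pos arc_of. e \<in> boundary_edges F})"
    using finite_faces by (intro sum_multicount_gen) auto
  also have "\<dots> \<le> (\<Sum>e\<in>A. 2)"
    using assms card_faces_at_edge_le_2 by (intro sum_mono) blast
  finally show ?thesis
    by simp
qed

lemma three_card_faces_le: "3 * card (faces V E pos arc_of) \<le> 2 * card E"
proof -
  have "card {e \<in> E. e \<in> boundary_edges F} = 3" if F: "F \<in> faces V E pos arc_of" for F
  proof -
    obtain a b c where "bounded_by_triangle F a b c"
      using triangular_faces[OF F] by blast
    moreover have "{e \<in> E. e \<in> boundary_edges F} = boundary_edges F"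
      unfolding boundary_edges_def by blast
    ultimately show ?thesis
      using card_boundary_edges_triangle by simp
  qed
  then show ?thesis
    using sum_boundary_edges_le[of E] by simp
qed

lemma card_faces_le_edges_avoiding:
  assumes "independent_set E I"
  shows "card (faces V E pos arc_of) \<le> 2 * card {e \<in> E. e \<inter> I = {}}"
proof -
  let ?A = "{e \<in> E. e \<inter> I = {}}"
  have one_le: "1 \<le> card {e \<in> ?A. e \<in> boundary_edges F}" if F: "F \<in> faces V E pos arc_of" for F
  proof -
    obtain a b c where t: "bounded_by_triangle F a b c"
      using triangular_faces[OF F] by blast
    then have "{a, b} \<in> E" "{b, c} \<in> E" "{a, c} \<in> E"
      unfolding bounded_by_triangle_def by auto
    then have "{a, b} \<in> ?A \<or> {b, c} \<in> ?A \<or> {a, c} \<in> ?A"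
      using assms unfolding independent_set_def adjacent_def by auto
    then have "{e \<in> ?A. e \<in> boundary_edges F} \<noteq> {}"
      unfolding boundary_edges_triangle[OF t] by blast
    moreover have "finite {e \<in> ?A. e \<in> boundary_edges F}"
      using finite_edges by simp
    ultimately show ?thesis
      by (simp add: Suc_le_eq card_gt_0_iff)
  qed
  have "card (faces V E pos arc_of) = (\<Sum>F\<in>faces V E pos arc_of. 1)"
    by (rule card_eq_sum)
  also have "\<dots> \<le> (\<Sum>F\<in>faces V E pos arc_of. card {e \<in> ?A. e \<in> boundary_edges F})"
    by (intro sum_mono one_le)
  also have "\<dots> \<le> 2 * card ?A"
    by (rule sum_boundary_edges_le) blast
  finally show ?thesis .
qed

lemma euler_triangulation: "card E + 2 \<le> card (faces V E pos arc_of) + card V"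
proof -
  obtain K where K: "K \<subseteq> faces V E pos arc_of" "finite K"
    "card E + card (graph_components V E) + 1 \<le> card K + card V"
    using euler_inequality[of E] unfolding faces_def by blast
  have "card K \<le> card (faces V E pos arc_of)"
    using K(1) finite_faces by (rule card_mono[rotated])
  moreover obtain F where "F \<in> faces V E pos arc_of"
    using components_Compl_compact_nonempty[OF compact_drawing[of E]] unfolding faces_def by blast
  then obtain a b c where "bounded_by_triangle F a b c"
    using triangular_faces by blast
  then have "V \<noteq> {}"
    unfolding bounded_by_triangle_def using edge_vertices by blast
  then have "1 \<le> card (graph_components V E)"
    using finite_vertices unfolding graph_components_def by (simp add: Suc_le_eq card_gt_0_iff)
  ultimately show ?thesis
    using K(3) by linarith
qed

end

lemma triangulation_plane_triangulation:
  assumes "triangulation V E"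
  obtains pos arc_of where "plane_triangulation V E pos arc_of"
proof -
  obtain pos arc_of where plane: "plane_graph V E pos arc_of"
    and triangles: "\<forall>F\<in>faces V E pos arc_of. \<exists>a b c. a \<noteq> b \<and> b \<noteq> c \<and> a \<noteq> c \<and>
      {a, b} \<in> E \<and> {b, c} \<in> E \<and> {a, c} \<in> E \<and>
      frontier F = path_image (arc_of {a, b}) \<union> path_image (arc_of {b, c}) \<union> path_image (arc_of {a, c})"
    using assms unfolding triangulation_def plane_graph_def by blast
  interpret plane_graph V E pos arc_of
    by (rule plane)
  have "plane_triangulation V E pos arc_of"
    using triangles by unfold_locales (simp add: bounded_by_triangle_def)
  then show ?thesis
    by (rule that)
qed

theorem mainTheorem2:
  fixes V :: "'a set" and E :: "'a set set" and I :: "'a set"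
  assumes "triangulation V E"
    and "I \<subseteq> V"
    and "independent_set E I"
    and "\<forall>v\<in>I. degree V E v \<ge> 6"
  shows "real (card I) \<le> (real (card V) - 2) / 3"
proof -
  obtain pos arc_of where "plane_triangulation V E pos arc_of"
    using triangulation_plane_triangulation[OF assms(1)] .
  then interpret plane_triangulation V E pos arc_of .
  have "card E = card {e \<in> E. e \<inter> I \<noteq> {}} + card {e \<in> E. e \<inter> I = {}}"
    using finite_edges by (subst card_Un_disjoint[symmetric]) (auto intro: arg_cong[where f = card])
  moreover have "6 * card I \<le> card {e \<in> E. e \<inter> I \<noteq> {}}"
    using card_edges_meeting_independent_set[OF simple assms(2-4)] .
  moreover note euler_triangulation three_card_faces_le card_faces_le_edges_avoiding[OF assms(3)]
  ultimately have "real (3 * card I + 2) \<le> real (card V)"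
    by linarith
  then show ?thesis
    by simp
qed

end
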